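(* Let $N,n,T_h\in\mathbb{Z}_{>0}$, $\varepsilon>0$, for each $i\in\{1,\dots,N\}$ let $A_i,B_i\in\mathbb{R}^{n\times n}$ with $B_i$ invertible, and let $x_1^{\mathsf d},\dots,x_N^{\mathsf d}\in\mathbb{R}^n$. Consider the discrete-time system on $(x,\beta)\in\mathbb{R}^{nN}\times\mathbb{R}_{>0}^N$, \[ x(k+1)=f_1(x(k),\beta(k)),\qquad \beta(k+1)=f_2(x(k),\beta(k)), \] where, writing $x=[x_1;\dots;x_N]$, \[ \tilde P(x,\beta):=\big(\tfrac1N1_N\oslash[K(x)\beta]\big)^{\mathrm{diag}}K(x)\,\beta^{\mathrm{diag}}, \] $f_1(x,\beta)$ is the vector whose $i$-th block ($i=1,\dots,N$) is $\bar A_ix_i+(I_n-\bar A_i)\,N\sum_{j=1}^N\tilde P_{ij}(x,\beta)\,x_j^{\mathsf d}$, and \[ f_2(x,\beta):=\tfrac1N1_N\oslash\Big[K(f_1(x,\beta))^\top\big(\tfrac1N1_N\oslash[K(x)\beta]\big)\Big]. \] Then this system has at least one equilibrium point $(x^{\mathsf e},\beta^{\mathsf e})\in\mathbb{R}^{nN}\times(\mathbb{R}_{>0}^N/{\sim})$, i.e. a pair with $f_1(x^{\mathsf e},\beta^{\mathsf e})=x^{\mathsf e}$ and $f_2(x^{\mathsf e},\beta^{\mathsf e})\sim\beta^{\mathsf e}$.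
   Context: Notation: $v^{\mathrm{diag}}$ is the diagonal matrix with diagonal $v$; $\oslash$ is elementwise division of positive vectors; $1_N$ is the all-ones vector; for positive semidefinite $M$, $\|x\|_M=(x^\top Mx)^{1/2}$; for $\beta,\beta'\in\mathbb{R}_{>0}^N$, $\beta\sim\beta'$ iff $\beta=r\beta'$ for some $r>0$, and $\mathbb{R}_{>0}^N/{\sim}$ is the corresponding quotient (the map $f_1$ is invariant and $f_2$ is positively homogeneous in $\beta$, so the system is well defined on the quotient). Definitions: $G_{i,T_h}:=\sum_{k=0}^{T_h-1}A_i^kB_iB_i^\top(A_i^\top)^k$, $\mathcal{G}_i:=(A_i^{T_h})^\top G_{i,T_h}^{-1}A_i^{T_h}$, $\bar A_i:=A_i-B_iB_i^\top(A_i^\top)^{T_h-1}G_{i,T_h}^{-1}A_i^{T_h}$, and $K(x)\in\mathbb{R}_{>0}^{N\times N}$ has entries $K_{ij}(x)=\exp\!\big(-\|x_i-x_j^{\mathsf d}\|_{\mathcal{G}_i}^2/\varepsilon\big)$. This system is the closed loop of Sinkhorn MPC with energy cost and the barycentric target $x_{\rm tmp}^{\mathsf d,i}(P)=N\sum_jP_{ij}x_j^{\mathsf d}$. *)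

theory Defs
  imports "HOL-Analysis.Analysis"
begin

(* Agents are indexed by a finite type 'N (N = CARD('N)), states live in real^'n
   (n = CARD('n)); matrices are real^'n^'n. *)

definition mpow :: "real^'n^'n \<Rightarrow> nat \<Rightarrow> real^'n^'n" where
  "mpow M k = (((**) M) ^^ k) (mat 1)"

definition gram :: "real^'n^'n \<Rightarrow> real^'n^'n \<Rightarrow> nat \<Rightarrow> real^'n^'n" where
  "gram A B Th = (\<Sum>k<Th. mpow A k ** B ** transpose B ** transpose (mpow A k))"

definition calG :: "real^'n^'n \<Rightarrow> real^'n^'n \<Rightarrow> nat \<Rightarrow> real^'n^'n" where
  "calG A B Th = transpose (mpow A Th) ** matrix_inv (gram A B Th) ** mpow A Th"

definition Abar :: "real^'n^'n \<Rightarrow> real^'n^'n \<Rightarrow> nat \<Rightarrow> real^'n^'n" where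
  "Abar A B Th = A - B ** transpose B ** transpose (mpow A (Th - 1))
                   ** matrix_inv (gram A B Th) ** mpow A Th"

definition wnorm :: "real^'n^'n \<Rightarrow> real^'n \<Rightarrow> real" where
  "wnorm M x = sqrt (x \<bullet> (M *v x))"

definition Kmat :: "('N \<Rightarrow> real^'n^'n) \<Rightarrow> ('N \<Rightarrow> real^'n^'n) \<Rightarrow> nat \<Rightarrow> real
     \<Rightarrow> ('N \<Rightarrow> real^'n) \<Rightarrow> ('N \<Rightarrow> real^'n) \<Rightarrow> 'N \<Rightarrow> 'N \<Rightarrow> real" where
  "Kmat A B Th eps xd x i j =
     exp (- (wnorm (calG (A i) (B i) Th) (x i - xd j))\<^sup>2 / eps)"

definition Ptilde :: "('N::finite \<Rightarrow> real^'n^'n) \<Rightarrow> ('N \<Rightarrow> real^'n^'n) \<Rightarrow> nat \<Rightarrow> real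
     \<Rightarrow> ('N \<Rightarrow> real^'n) \<Rightarrow> ('N \<Rightarrow> real^'n) \<Rightarrow> ('N \<Rightarrow> real) \<Rightarrow> 'N \<Rightarrow> 'N \<Rightarrow> real" where
  "Ptilde A B Th eps xd x \<beta> i j =
     ((1 / real CARD('N)) / (\<Sum>l\<in>UNIV. Kmat A B Th eps xd x i l * \<beta> l))
       * Kmat A B Th eps xd x i j * \<beta> j"

definition f1 :: "('N::finite \<Rightarrow> real^'n^'n) \<Rightarrow> ('N \<Rightarrow> real^'n^'n) \<Rightarrow> nat \<Rightarrow> real
     \<Rightarrow> ('N \<Rightarrow> real^'n) \<Rightarrow> ('N \<Rightarrow> real^'n) \<Rightarrow> ('N \<Rightarrow> real) \<Rightarrow> 'N \<Rightarrow> real^'n" where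
  "f1 A B Th eps xd x \<beta> i =
     Abar (A i) (B i) Th *v x i
     + (mat 1 - Abar (A i) (B i) Th) *v
         (real CARD('N) *\<^sub>R (\<Sum>j\<in>UNIV. Ptilde A B Th eps xd x \<beta> i j *\<^sub>R xd j))"

definition f2 :: "('N::finite \<Rightarrow> real^'n^'n) \<Rightarrow> ('N \<Rightarrow> real^'n^'n) \<Rightarrow> nat \<Rightarrow> real
     \<Rightarrow> ('N \<Rightarrow> real^'n) \<Rightarrow> ('N \<Rightarrow> real^'n) \<Rightarrow> ('N \<Rightarrow> real) \<Rightarrow> 'N \<Rightarrow> real" where
  "f2 A B Th eps xd x \<beta> j =
     (1 / real CARD('N)) /
       (\<Sum>i\<in>UNIV. Kmat A B Th eps xd (f1 A B Th eps xd x \<beta>) i j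
          * ((1 / real CARD('N)) / (\<Sum>l\<in>UNIV. Kmat A B Th eps xd x i l * \<beta> l)))"

end

theory Submission
  imports Defs
begin

(* Brouwer's fixed point theorem on (ball of radius N \<Sum>j |xd j|) \<times> (probability simplex), applied to
   (x, \<beta>) \<mapsto> (barycentric targets of x, f2 x \<beta> rescaled to unit mass).  The rows of \<tilde>P sum to
   1/N, so the targets are convex combinations of the xd j and stay in the ball, and f2 is positive
   and continuous.  At a fixed point x equals its targets, which makes it a fixed point of f1
   whatever Abar is, and f2 x \<beta> is a positive multiple of \<beta>. *)

definition prob_simplex :: "(real^'m) set" where
  "prob_simplex = {b. (\<forall>j. 0 \<le> b $ j) \<and> (\<Sum>j\<in>UNIV. b $ j) = 1}"

lemma prob_simplex_nonempty: "prob_simplex \<noteq> {}"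
proof -
  have "(\<chi> j. 1 / real CARD('m)) \<in> (prob_simplex :: (real^'m) set)"
    by (simp add: prob_simplex_def)
  then show ?thesis by blast
qed

lemma convex_prob_simplex: "convex prob_simplex"
  unfolding convex_def prob_simplex_def
  by (auto simp: sum.distrib simp flip: sum_distrib_left)

lemma compact_prob_simplex: "compact prob_simplex"
proof -
  have "closed prob_simplex"
    unfolding prob_simplex_def
    by (intro closed_Collect_conj closed_Collect_all closed_Collect_le closed_Collect_eq
        continuous_intros)
  moreover have "norm b \<le> 1" if "b \<in> prob_simplex" for b :: "real^'m"
    using norm_le_l1_cart[of b] that by (simp add: prob_simplex_def)
  then have "bounded prob_simplex"
    by (auto simp: bounded_iff)
  ultimately show ?thesis
    using compact_eq_bounded_closed by blast
qed

lemma prob_simplexD: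
  assumes "b \<in> prob_simplex"
  shows "\<forall>j. 0 \<le> b $ j" and "\<exists>j. 0 < b $ j"
proof -
  show "\<forall>j. 0 \<le> b $ j"
    using assms by (simp add: prob_simplex_def)
  show "\<exists>j. 0 < b $ j"
  proof (rule ccontr)
    assume "\<not> (\<exists>j. 0 < b $ j)"
    then have "(\<Sum>j\<in>UNIV. b $ j) \<le> 0" by (simp add: sum_nonpos not_less)
    with assms show False by (simp add: prob_simplex_def)
  qed
qed

lemma scaleR_inverse_sum_in_prob_simplex:
  fixes v :: "real^'m"
  assumes "\<forall>j. 0 < v $ j"
  shows "v /\<^sub>R (\<Sum>j\<in>UNIV. v $ j) \<in> prob_simplex"
proof -
  have "0 < (\<Sum>j\<in>UNIV. v $ j)"
    using assms by (simp add: sum_pos)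
  then show ?thesis
    using assms by (auto simp: prob_simplex_def less_imp_le simp flip: sum_distrib_left)
qed

lemma brouwer_up_to_scaling:
  fixes \<phi> :: "'a::euclidean_space \<Rightarrow> real^'m \<Rightarrow> 'a"
    and \<psi> :: "'a \<Rightarrow> real^'m \<Rightarrow> real^'m"
  assumes C: "compact C" "convex C" "C \<noteq> {}"
    and continuous_\<phi>: "continuous_on (C \<times> prob_simplex) (\<lambda>(x, b). \<phi> x b)"
    and continuous_\<psi>: "continuous_on (C \<times> prob_simplex) (\<lambda>(x, b). \<psi> x b)"
    and \<phi>_in: "\<And>x b. x \<in> C \<Longrightarrow> b \<in> prob_simplex \<Longrightarrow> \<phi> x b \<in> C"
    and \<psi>_pos: "\<And>x b j. x \<in> C \<Longrightarrow> b \<in> prob_simplex \<Longrightarrow> 0 < \<psi> x b $ j"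
  obtains x b where "x \<in> C" "\<forall>j. 0 < b $ j" "\<phi> x b = x" "\<exists>r>0. \<psi> x b = r *\<^sub>R b"
proof -
  define S where "S = C \<times> (prob_simplex :: (real^'m) set)"
  define mass where "mass x b = (\<Sum>j\<in>UNIV. \<psi> x b $ j)" for x b
  define g where "g = (\<lambda>(x, b). (\<phi> x b, \<psi> x b /\<^sub>R mass x b))"
  have mass_pos: "0 < mass x b" if "x \<in> C" "b \<in> prob_simplex" for x b
    unfolding mass_def using \<psi>_pos[OF that] by (simp add: sum_pos)
  have "continuous_on S (\<lambda>(x, b). mass x b)"
    using continuous_\<psi> unfolding mass_def S_def case_prod_unfold
    by (intro continuous_on_sum continuous_on_component)
  then have "continuous_on S (\<lambda>(x, b). \<psi> x b /\<^sub>R mass x b)"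
    using continuous_\<psi> mass_pos unfolding S_def case_prod_unfold
    by (intro continuous_on_scaleR continuous_on_inverse) (auto simp: less_imp_neq[symmetric])
  then have continuous_g: "continuous_on S g"
    using continuous_\<phi> unfolding g_def S_def case_prod_unfold
    by (intro continuous_on_Pair)
  have g_in: "g \<in> S \<rightarrow> S"
  proof
    fix z assume "z \<in> S"
    then obtain x b where z: "z = (x, b)" "x \<in> C" "b \<in> prob_simplex"
      by (auto simp: S_def)
    then show "g z \<in> S"
      using \<phi>_in scaleR_inverse_sum_in_prob_simplex[of "\<psi> x b"] \<psi>_pos
      by (simp add: g_def S_def mass_def)
  qed
  have "compact S"
    unfolding S_def using C(1) compact_prob_simplex by (rule compact_Times)
  moreover have "convex S"
    unfolding S_def using C(2) convex_prob_simplex by (rule convex_Times)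
  moreover have "S \<noteq> {}"
    unfolding S_def using C(3) prob_simplex_nonempty by simp
  ultimately obtain z where z: "z \<in> S" "g z = z"
    using brouwer[OF _ _ _ continuous_g g_in] by blast
  obtain x b where xb: "z = (x, b)"
    by (cases z)
  have x: "x \<in> C" and b: "b \<in> prob_simplex"
    using z(1) by (simp_all add: S_def xb)
  have fixed_\<phi>: "\<phi> x b = x" and fixed_\<psi>: "\<psi> x b /\<^sub>R mass x b = b"
    using z(2) by (simp_all add: g_def xb)
  have "mass x b *\<^sub>R (\<psi> x b /\<^sub>R mass x b) = mass x b *\<^sub>R b"
    using fixed_\<psi> by simp
  then have \<psi>_eq: "\<psi> x b = mass x b *\<^sub>R b"
    using mass_pos[OF x b] by simp
  then have "0 < b $ j" for j
    using \<psi>_pos[OF x b, of j] mass_pos[OF x b] by (simp add: zero_less_mult_iff)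
  moreover note \<psi>_eq
  ultimately show ?thesis
    using that x fixed_\<phi> mass_pos[OF x b] by blast
qed

lemma norm_vec_le_sum_norm: "norm (x :: ('a::real_normed_vector)^'m) \<le> (\<Sum>i\<in>UNIV. norm (x $ i))"
  unfolding norm_vec_def by (rule L2_set_le_sum) simp

lemma continuous_on_matrix_vector_mult [continuous_intros]:
  fixes M :: "real^'n^'m"
  shows "continuous_on S f \<Longrightarrow> continuous_on S (\<lambda>x. M *v f x)"
  using continuous_on_compose2[OF matrix_vector_mult_linear_continuous_on[of UNIV M]] by auto

(* The Sinkhorn scaling vector u = (1/N) 1 \<oslash> K(x)\<beta>, so that \<tilde>P = diag(u) K(x) diag(\<beta>)
   and f2 x \<beta> = (1/N) 1 \<oslash> K(f1 x \<beta>)^T u. *)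
definition sinkhorn_u :: "('N::finite \<Rightarrow> real^'n^'n) \<Rightarrow> ('N \<Rightarrow> real^'n^'n) \<Rightarrow> nat \<Rightarrow> real
     \<Rightarrow> ('N \<Rightarrow> real^'n) \<Rightarrow> ('N \<Rightarrow> real^'n) \<Rightarrow> ('N \<Rightarrow> real) \<Rightarrow> 'N \<Rightarrow> real" where
  "sinkhorn_u A B Th eps xd x \<beta> i =
     (1 / real CARD('N)) / (\<Sum>l\<in>UNIV. Kmat A B Th eps xd x i l * \<beta> l)"

(* The barycentric target x_tmp^(d,i)(\<tilde>P) towards which f1 steers agent i. *)
definition bary_target :: "('N::finite \<Rightarrow> real^'n^'n) \<Rightarrow> ('N \<Rightarrow> real^'n^'n) \<Rightarrow> nat \<Rightarrow> real
     \<Rightarrow> ('N \<Rightarrow> real^'n) \<Rightarrow> ('N \<Rightarrow> real^'n) \<Rightarrow> ('N \<Rightarrow> real) \<Rightarrow> 'N \<Rightarrow> real^'n" where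
  "bary_target A B Th eps xd x \<beta> i =
     real CARD('N) *\<^sub>R (\<Sum>j\<in>UNIV. Ptilde A B Th eps xd x \<beta> i j *\<^sub>R xd j)"

context
  fixes A B :: "'N::finite \<Rightarrow> real^'n^'n"
    and xd :: "'N \<Rightarrow> real^'n"
    and Th :: nat and eps :: real
begin

lemma Ptilde_eq_sinkhorn_u:
  "Ptilde A B Th eps xd x \<beta> i j = sinkhorn_u A B Th eps xd x \<beta> i * Kmat A B Th eps xd x i j * \<beta> j"
  unfolding Ptilde_def sinkhorn_u_def ..

lemma f2_eq_sinkhorn_u:
  "f2 A B Th eps xd x \<beta> j =
     (1 / real CARD('N)) /
       (\<Sum>i\<in>UNIV. Kmat A B Th eps xd (f1 A B Th eps xd x \<beta>) i j * sinkhorn_u A B Th eps xd x \<beta> i)"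
  unfolding f2_def sinkhorn_u_def ..

lemma Kmat_pos: "0 < Kmat A B Th eps xd x i j"
  unfolding Kmat_def by simp

lemma Kmat_weighted_sum_pos:
  assumes "\<forall>l. 0 \<le> \<beta> l" "\<exists>l. 0 < \<beta> l"
  shows "0 < (\<Sum>l\<in>UNIV. Kmat A B Th eps xd x i l * \<beta> l)"
proof -
  obtain l where "0 < \<beta> l" using assms(2) ..
  moreover have "0 \<le> Kmat A B Th eps xd x i l' * \<beta> l'" for l'
    using Kmat_pos[of x i l'] assms(1) by simp
  ultimately show ?thesis
    using Kmat_pos[of x i l] by (intro sum_pos2[of UNIV l]) simp_all
qed

lemma sinkhorn_u_pos:
  assumes "\<forall>l. 0 \<le> \<beta> l" "\<exists>l. 0 < \<beta> l"
  shows "0 < sinkhorn_u A B Th eps xd x \<beta> i"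
  using Kmat_weighted_sum_pos[OF assms] by (simp add: sinkhorn_u_def)

lemma Ptilde_row_sum:
  assumes "\<forall>l. 0 \<le> \<beta> l" "\<exists>l. 0 < \<beta> l"
  shows "(\<Sum>j\<in>UNIV. Ptilde A B Th eps xd x \<beta> i j) = 1 / real CARD('N)"
proof -
  have "(\<Sum>j\<in>UNIV. Ptilde A B Th eps xd x \<beta> i j)
        = sinkhorn_u A B Th eps xd x \<beta> i * (\<Sum>l\<in>UNIV. Kmat A B Th eps xd x i l * \<beta> l)"
    by (simp add: Ptilde_eq_sinkhorn_u sum_distrib_left mult.assoc)
  then show ?thesis
    using Kmat_weighted_sum_pos[OF assms, of x i] by (simp add: sinkhorn_u_def)
qed

lemma norm_bary_target_le:
  assumes "\<forall>l. 0 \<le> \<beta> l" "\<exists>l. 0 < \<beta> l"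
  shows "norm (bary_target A B Th eps xd x \<beta> i) \<le> (\<Sum>j\<in>UNIV. norm (xd j))"
proof -
  let ?P = "Ptilde A B Th eps xd x \<beta> i" and ?M = "\<Sum>j\<in>UNIV. norm (xd j)"
  have P_nonneg: "0 \<le> ?P j" for j
    unfolding Ptilde_eq_sinkhorn_u using sinkhorn_u_pos[OF assms, of x i] Kmat_pos[of x i j] assms(1)
    by (intro mult_nonneg_nonneg) (auto intro: less_imp_le)
  have "norm (bary_target A B Th eps xd x \<beta> i) \<le> real CARD('N) * (\<Sum>j\<in>UNIV. ?P j * norm (xd j))"
    unfolding bary_target_def
    using norm_sum[of "\<lambda>j. ?P j *\<^sub>R xd j" UNIV] P_nonneg by simp
  also have "\<dots> \<le> real CARD('N) * (\<Sum>j\<in>UNIV. ?P j * ?M)"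
    using P_nonneg by (intro mult_left_mono sum_mono mult_left_mono member_le_sum) auto
  also have "\<dots> = ?M"
    using Ptilde_row_sum[OF assms] by (simp flip: sum_distrib_right)
  finally show ?thesis .
qed

lemma norm_vec_bary_target_le:
  assumes "\<forall>l. 0 \<le> \<beta> l" "\<exists>l. 0 < \<beta> l"
  shows "norm (\<chi> i. bary_target A B Th eps xd x \<beta> i)
           \<le> real CARD('N) * (\<Sum>j\<in>UNIV. norm (xd j))"
proof -
  have "norm (\<chi> i. bary_target A B Th eps xd x \<beta> i)
        \<le> (\<Sum>i\<in>UNIV. norm (bary_target A B Th eps xd x \<beta> i))"
    using norm_vec_le_sum_norm[of "\<chi> i. bary_target A B Th eps xd x \<beta> i"] by simp
  also have "\<dots> \<le> (\<Sum>i\<in>(UNIV :: 'N set). \<Sum>j\<in>UNIV. norm (xd j))"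
    using norm_bary_target_le[OF assms] by (intro sum_mono)
  finally show ?thesis by simp
qed

lemma f1_eq_self_if_bary_target_eq_self:
  assumes "bary_target A B Th eps xd x \<beta> = x"
  shows "f1 A B Th eps xd x \<beta> = x"
proof
  fix i
  show "f1 A B Th eps xd x \<beta> i = x i"
    using fun_cong[OF assms, of i]
    by (simp add: f1_def bary_target_def matrix_vector_mult_diff_rdistrib)
qed

lemma f2_pos:
  assumes "\<forall>l. 0 \<le> \<beta> l" "\<exists>l. 0 < \<beta> l"
  shows "0 < f2 A B Th eps xd x \<beta> j"
  unfolding f2_eq_sinkhorn_u
  by (intro divide_pos_pos sum_pos mult_pos_pos) (auto simp: Kmat_pos sinkhorn_u_pos[OF assms])

lemma continuous_on_Kmat [continuous_intros]:
  assumes "continuous_on S (\<lambda>z. x z i)"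
  shows "continuous_on S (\<lambda>z. Kmat A B Th eps xd (x z) i j)"
  unfolding Kmat_def wnorm_def divide_inverse by (intro continuous_intros assms)

context
  fixes S :: "'a::topological_space set"
    and x :: "'a \<Rightarrow> 'N \<Rightarrow> real^'n"
    and \<beta> :: "'a \<Rightarrow> 'N \<Rightarrow> real"
  assumes continuous_x: "\<And>i. continuous_on S (\<lambda>z. x z i)"
    and continuous_\<beta>: "\<And>l. continuous_on S (\<lambda>z. \<beta> z l)"
    and \<beta>_nonneg: "\<And>z. z \<in> S \<Longrightarrow> \<forall>l. 0 \<le> \<beta> z l"
    and \<beta>_nonzero: "\<And>z. z \<in> S \<Longrightarrow> \<exists>l. 0 < \<beta> z l"
begin

lemma continuous_on_sinkhorn_u: "continuous_on S (\<lambda>z. sinkhorn_u A B Th eps xd (x z) (\<beta> z) i)"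
proof -
  have "(\<Sum>l\<in>UNIV. Kmat A B Th eps xd (x z) i l * \<beta> z l) \<noteq> 0" if "z \<in> S" for z
    using Kmat_weighted_sum_pos[OF \<beta>_nonneg[OF that] \<beta>_nonzero[OF that], of "x z" i] by simp
  then show ?thesis
    unfolding sinkhorn_u_def by (intro continuous_intros continuous_x continuous_\<beta>) auto
qed

lemma continuous_on_f1: "continuous_on S (\<lambda>z. f1 A B Th eps xd (x z) (\<beta> z) i)"
  unfolding f1_def Ptilde_eq_sinkhorn_u
  by (intro continuous_intros continuous_x continuous_\<beta> continuous_on_sinkhorn_u)

lemma continuous_on_bary_target: "continuous_on S (\<lambda>z. bary_target A B Th eps xd (x z) (\<beta> z) i)"
  unfolding bary_target_def Ptilde_eq_sinkhorn_u
  by (intro continuous_intros continuous_x continuous_\<beta> continuous_on_sinkhorn_u)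

lemma continuous_on_f2: "continuous_on S (\<lambda>z. f2 A B Th eps xd (x z) (\<beta> z) j)"
proof -
  have "(\<Sum>i\<in>UNIV. Kmat A B Th eps xd (f1 A B Th eps xd (x z) (\<beta> z)) i j
           * sinkhorn_u A B Th eps xd (x z) (\<beta> z) i) \<noteq> 0" if "z \<in> S" for z
    using f2_pos[OF \<beta>_nonneg[OF that] \<beta>_nonzero[OF that], of "x z" j] by (auto simp: f2_eq_sinkhorn_u)
  then show ?thesis
    unfolding f2_eq_sinkhorn_u by (intro continuous_intros continuous_on_f1 continuous_on_sinkhorn_u) auto
qed

end

lemma continuous_on_vec_bary_target:
  "continuous_on (T \<times> prob_simplex) (\<lambda>(X, b). \<chi> i. bary_target A B Th eps xd (($) X) (($) b) i)"
  unfolding case_prod_unfold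
  by (intro continuous_on_vec_lambda continuous_on_bary_target continuous_on_component
      continuous_on_fst continuous_on_snd continuous_on_id) (auto dest: prob_simplexD)

lemma continuous_on_vec_f2:
  "continuous_on (T \<times> prob_simplex) (\<lambda>(X, b). \<chi> j. f2 A B Th eps xd (($) X) (($) b) j)"
  unfolding case_prod_unfold
  by (intro continuous_on_vec_lambda continuous_on_f2 continuous_on_component
      continuous_on_fst continuous_on_snd continuous_on_id) (auto dest: prob_simplexD)

end

theorem proposition2:
  fixes A B :: "'N::finite \<Rightarrow> real^'n^'n"
    and xd :: "'N \<Rightarrow> real^'n"
    and Th :: nat and eps :: real
  assumes "Th > 0" and "eps > 0"
    and "\<And>i. invertible (B i)"
  shows "\<exists>xe :: 'N \<Rightarrow> real^'n. \<exists>\<beta>e :: 'N \<Rightarrow> real.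
           (\<forall>i. \<beta>e i > 0)
         \<and> f1 A B Th eps xd xe \<beta>e = xe
         \<and> (\<exists>r > 0. f2 A B Th eps xd xe \<beta>e = (\<lambda>i. r * \<beta>e i))"
proof -
  define R where "R = real CARD('N) * (\<Sum>j\<in>UNIV. norm (xd j))"
  \<comment> \<open>Brouwer's theorem needs a euclidean space, so x and \<beta> are encoded as vectors X and b.\<close>
  define \<phi> where "\<phi> X b = (\<chi> i. bary_target A B Th eps xd (($) X) (($) b) i)" for X b
  define \<psi> where "\<psi> X b = (\<chi> j. f2 A B Th eps xd (($) X) (($) b) j)" for X :: "(real^'n)^'N" and b
  have "0 \<le> R"
    unfolding R_def by (simp add: sum_nonneg)
  obtain X b where b_pos: "\<forall>j. 0 < b $ j" and fixed: "\<phi> X b = X"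
    and scaled: "\<exists>r>0. \<psi> X b = r *\<^sub>R b"
  proof (rule brouwer_up_to_scaling[of "cball 0 R" \<phi> \<psi>])
    show "continuous_on (cball 0 R \<times> prob_simplex) (\<lambda>(X, b). \<phi> X b)"
      unfolding \<phi>_def by (rule continuous_on_vec_bary_target)
    show "continuous_on (cball 0 R \<times> prob_simplex) (\<lambda>(X, b). \<psi> X b)"
      unfolding \<psi>_def by (rule continuous_on_vec_f2)
    show "\<phi> X b \<in> cball 0 R" if "X \<in> cball 0 R" "b \<in> prob_simplex" for X b
      using norm_vec_bary_target_le[OF prob_simplexD[OF that(2)]] by (simp add: \<phi>_def R_def)
    show "0 < \<psi> X b $ j" if "X \<in> cball 0 R" "b \<in> prob_simplex" for X b j
      using f2_pos[OF prob_simplexD[OF that(2)]] by (simp add: \<psi>_def)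
  qed (use \<open>0 \<le> R\<close> that in auto)
  have "bary_target A B Th eps xd (($) X) (($) b) = ($) X"
    using fixed by (simp add: \<phi>_def fun_eq_iff vec_eq_iff)
  then have "f1 A B Th eps xd (($) X) (($) b) = ($) X"
    by (rule f1_eq_self_if_bary_target_eq_self)
  moreover obtain r where "r > 0" "f2 A B Th eps xd (($) X) (($) b) = (\<lambda>j. r * b $ j)"
    using scaled by (auto simp: \<psi>_def fun_eq_iff vec_eq_iff)
  ultimately show ?thesis
    using b_pos by (intro exI[of _ "($) X"] exI[of _ "($) b"]) auto
qed

end
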